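(* In the game $\mathrm{CN}(7,4)$, if $\mathbf p\notin S$ and $\mathbf p$ has at least two stacks of height $0$, then there is a legal move from $\mathbf p$ to some $\mathbf p'\in S_1\cup S_2\cup S_4$. Here, writing a position as $(a,b,c,d,e,f,g)$ with $a$ a minimum entry, $S_1=\{a=b=0,\ c=g>0,\ d+e+f=c\}$, $S_2=\{a=b=c=d=e=f=g\}$, $S_3=\{a=b,\ c=g,\ d=f,\ a+c=d+e,\ 0<a<e\}$, $S_4=\{a=f,\ b+c=d+e=g+a,\ a<\min\{b,e\},\ a<\max\{c,d\}\}$, and $S=S_1\cup S_2\cup S_3\cup S_4$.
   Context: Circular Nim $\mathrm{CN}(7,4)$: $7$ stacks of tokens are arranged in a circle; a position is a vector $(p_1,\dots,p_7)$ of nonnegative integers giving the stack heights in order around the circle, determined only up to rotation and reflection. A legal move consists of choosing $4$ cyclically consecutive stacks and removing at least one token from at least one of these $4$ stacks (any number from each chosen stack; other stacks unchanged). A position belongs to $S_i$ if some rotation and/or reflection $(a,b,c,d,e,f,g)$ of it with $a$ equal to the minimum entry satisfies the conditions defining $S_i$. *)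

theory Defs
  imports Main
begin

text \<open>Positions of CN(7,4): lists of 7 stack heights in circular order.
  Equivalence up to rotation and reflection is handled via the set of
  symmetric images.\<close>

definition cn_pos :: "nat list \<Rightarrow> bool" where
  "cn_pos p \<longleftrightarrow> length p = 7"

definition sym_images :: "nat list \<Rightarrow> nat list set" where
  "sym_images p = {rotate k p | k. k < 7} \<union> {rotate k (rev p) | k. k < 7}"

definition S1_cond :: "nat list \<Rightarrow> bool" where
  "S1_cond q \<longleftrightarrow> (let a = q!0; b = q!1; c = q!2; d = q!3; e = q!4; f = q!5; g = q!6 in
     a = 0 \<and> b = 0 \<and> c = g \<and> c > 0 \<and> d + e + f = c)"

definition S2_cond :: "nat list \<Rightarrow> bool" where
  "S2_cond q \<longleftrightarrow> (let a = q!0; b = q!1; c = q!2; d = q!3; e = q!4; f = q!5; g = q!6 in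
     a = b \<and> b = c \<and> c = d \<and> d = e \<and> e = f \<and> f = g)"

definition S3_cond :: "nat list \<Rightarrow> bool" where
  "S3_cond q \<longleftrightarrow> (let a = q!0; b = q!1; c = q!2; d = q!3; e = q!4; f = q!5; g = q!6 in
     a = b \<and> c = g \<and> d = f \<and> a + c = d + e \<and> 0 < a \<and> a < e)"

definition S4_cond :: "nat list \<Rightarrow> bool" where
  "S4_cond q \<longleftrightarrow> (let a = q!0; b = q!1; c = q!2; d = q!3; e = q!4; f = q!5; g = q!6 in
     a = f \<and> b + c = d + e \<and> d + e = g + a \<and> a < min b e \<and> a < max c d)"

definition in_class :: "(nat list \<Rightarrow> bool) \<Rightarrow> nat list \<Rightarrow> bool" where
  "in_class C p \<longleftrightarrow> (\<exists>q \<in> sym_images p. q!0 = Min (set p) \<and> C q)"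

definition inS :: "nat list \<Rightarrow> bool" where
  "inS p \<longleftrightarrow> in_class S1_cond p \<or> in_class S2_cond p \<or> in_class S3_cond p \<or> in_class S4_cond p"

definition cn_move :: "nat list \<Rightarrow> nat list \<Rightarrow> bool" where
  "cn_move p p' \<longleftrightarrow> length p = 7 \<and> length p' = 7 \<and>
     (\<exists>i<7. (\<forall>j<7. j \<notin> {(i + k) mod 7 | k. k < 4} \<longrightarrow> p'!j = p!j)) \<and>
     (\<forall>j<7. p'!j \<le> p!j) \<and> p' \<noteq> p"

end

theory Submission
  imports Defs
begin

(* Rotate p so that one of two zero stacks comes first. Of the two cyclic distances
   between the zeros exactly one is odd, so the other zero can be put at position 1, 3 or 5,
   giving the shapes [0,0,c,d,e,f,g], [0,b,c,0,e,f,g] and [0,b,c,d,e,0,g]. For each shape an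
   explicit move is exhibited by cases on the sizes of the remaining stacks: either it leaves
   nothing (S2), or it creates two adjacent zeros flanked by two equal stacks x whose three
   opposite stacks sum to x (S1), or it balances the stacks around two zeros at distance 2 (S4).
   Moves, S and the target classes are invariant under rotation, and a move from p is never
   trivial because p is not in S. *)

definition cn_lowering :: "nat list \<Rightarrow> nat list \<Rightarrow> bool" where
  "cn_lowering p p' \<longleftrightarrow> length p = 7 \<and> length p' = 7 \<and>
     (\<exists>i<7. \<forall>j<7. j \<notin> {(i + k) mod 7 | k. k < 4} \<longrightarrow> p'!j = p!j) \<and>
     (\<forall>j<7. p'!j \<le> p!j)"

definition in_S124 :: "nat list \<Rightarrow> bool" where
  "in_S124 p \<longleftrightarrow> in_class S1_cond p \<or> in_class S2_cond p \<or> in_class S4_cond p"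

definition moves_into_S124 :: "nat list \<Rightarrow> bool" where
  "moves_into_S124 p \<longleftrightarrow> (\<exists>p'. cn_move p p' \<and> in_S124 p')"

lemma cn_move_iff_lowering: "cn_move p p' \<longleftrightarrow> cn_lowering p p' \<and> p' \<noteq> p"
  unfolding cn_move_def cn_lowering_def by blast

lemma length_7_cases:
  assumes "length p = 7"
  obtains x0 x1 x2 x3 x4 x5 x6 where "p = [x0,x1,x2,x3,x4,x5,x6]"
  using assms by (simp add: numeral_eq_Suc length_Suc_conv) blast

lemma rotate_7:
  assumes "length p = 7"
  shows "rotate i p = [p!(i mod 7), p!((i+1) mod 7), p!((i+2) mod 7), p!((i+3) mod 7),
                       p!((i+4) mod 7), p!((i+5) mod 7), p!((i+6) mod 7)]"
proof -
  have "rotate i p = map (\<lambda>n. p ! ((i + n) mod 7)) [0..<7]"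
    using assms by (intro nth_equalityI) (simp_all add: nth_rotate)
  then show ?thesis by (simp add: upt_rec add.commute)
qed

lemma sym_images_7: "sym_images [x0,x1,x2,x3,x4,x5,x6] = {
  [x6,x5,x4,x3,x2,x1,x0], [x5,x4,x3,x2,x1,x0,x6], [x4,x3,x2,x1,x0,x6,x5], [x3,x2,x1,x0,x6,x5,x4],
  [x2,x1,x0,x6,x5,x4,x3], [x1,x0,x6,x5,x4,x3,x2], [x0,x6,x5,x4,x3,x2,x1],
  [x0,x1,x2,x3,x4,x5,x6], [x1,x2,x3,x4,x5,x6,x0], [x2,x3,x4,x5,x6,x0,x1], [x3,x4,x5,x6,x0,x1,x2],
  [x4,x5,x6,x0,x1,x2,x3], [x5,x6,x0,x1,x2,x3,x4], [x6,x0,x1,x2,x3,x4,x5]}"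
proof -
  have rotations: "{f k | k. k < (7::nat)} = {f 0, f 1, f 2, f 3, f 4, f 5, f 6}"
    for f :: "nat \<Rightarrow> nat list"
  proof -
    have "{f k | k. k < (7::nat)} = f ` set [0..<7]" by auto
    then show ?thesis by (simp add: upt_rec numeral_eq_Suc)
  qed
  show ?thesis unfolding sym_images_def rotations by (simp add: numeral_eq_Suc)
qed

lemma sym_images_rotate1_7:
  "sym_images [x1,x2,x3,x4,x5,x6,x0] = sym_images [x0,x1,x2,x3,x4,x5,x6]"
  unfolding sym_images_7 by (rule equalityI; simp)

lemma cn_lowering_7: "cn_lowering [x0,x1,x2,x3,x4,x5,x6] [y0,y1,y2,y3,y4,y5,y6] \<longleftrightarrow>
  ((y4 = x4 \<and> y5 = x5 \<and> y6 = x6) \<or> (y0 = x0 \<and> y5 = x5 \<and> y6 = x6) \<or> (y0 = x0 \<and> y1 = x1 \<and> y6 = x6) \<or>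
   (y0 = x0 \<and> y1 = x1 \<and> y2 = x2) \<or> (y1 = x1 \<and> y2 = x2 \<and> y3 = x3) \<or> (y2 = x2 \<and> y3 = x3 \<and> y4 = x4) \<or>
   (y3 = x3 \<and> y4 = x4 \<and> y5 = x5)) \<and>
  y0 \<le> x0 \<and> y1 \<le> x1 \<and> y2 \<le> x2 \<and> y3 \<le> x3 \<and> y4 \<le> x4 \<and> y5 \<le> x5 \<and> y6 \<le> x6"
proof -
  have window: "{(i + k) mod 7 | k. k < (4::nat)} = (\<lambda>k. (i + k) mod 7) ` set [0..<4]" for i
    by auto
  have "(\<forall>j<(7::nat). P j) \<longleftrightarrow> (\<forall>j\<in>set [0..<7]. P j)"
    and "(\<exists>j<(7::nat). P j) \<longleftrightarrow> (\<exists>j\<in>set [0..<7]. P j)" for P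
    by auto
  then show ?thesis unfolding cn_lowering_def window by (simp add: upt_rec)
qed

lemma in_class_rotate1:
  assumes "length p = 7"
  shows "in_class C (rotate1 p) \<longleftrightarrow> in_class C p"
proof -
  obtain x0 x1 x2 x3 x4 x5 x6 where p: "p = [x0,x1,x2,x3,x4,x5,x6]"
    using assms by (rule length_7_cases)
  have "sym_images (rotate1 p) = sym_images p"
    unfolding p by (simp add: sym_images_rotate1_7)
  then show ?thesis unfolding in_class_def by simp
qed

lemma in_class_rotate: "length p = 7 \<Longrightarrow> in_class C (rotate k p) \<longleftrightarrow> in_class C p"
  by (induction k) (simp_all add: in_class_rotate1)

lemma inS_rotate: "length p = 7 \<Longrightarrow> inS (rotate k p) \<longleftrightarrow> inS p"
  unfolding inS_def by (simp add: in_class_rotate)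

lemma in_S124_rotate: "length p = 7 \<Longrightarrow> in_S124 (rotate k p) \<longleftrightarrow> in_S124 p"
  unfolding in_S124_def by (simp add: in_class_rotate)

lemma cn_lowering_rotate1: "cn_lowering p p' \<Longrightarrow> cn_lowering (rotate1 p) (rotate1 p')"
proof -
  assume lowering: "cn_lowering p p'"
  then have "length p = 7" "length p' = 7" unfolding cn_lowering_def by simp_all
  then obtain x0 x1 x2 x3 x4 x5 x6 y0 y1 y2 y3 y4 y5 y6
    where "p = [x0,x1,x2,x3,x4,x5,x6]" "p' = [y0,y1,y2,y3,y4,y5,y6]"
    by (metis length_7_cases)
  with lowering show ?thesis by (auto simp: cn_lowering_7)
qed

lemma moves_into_S124_rotate1:
  assumes "moves_into_S124 p"
  shows "moves_into_S124 (rotate1 p)"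
proof -
  obtain p' where "cn_lowering p p'" "p' \<noteq> p" "in_S124 p'"
    using assms unfolding moves_into_S124_def cn_move_iff_lowering by blast
  moreover from \<open>cn_lowering p p'\<close> have "length p' = 7" unfolding cn_lowering_def by simp
  ultimately have "cn_move (rotate1 p) (rotate1 p')" "in_S124 (rotate1 p')"
    using in_S124_rotate[of p' 1]
    by (simp_all add: cn_move_iff_lowering cn_lowering_rotate1 inj_eq[OF inj_rotate1])
  then show ?thesis unfolding moves_into_S124_def by blast
qed

lemma moves_into_S124_rotate:
  assumes "length p = 7"
  shows "moves_into_S124 (rotate k p) \<longleftrightarrow> moves_into_S124 p"
proof -
  have forward: "moves_into_S124 q \<Longrightarrow> moves_into_S124 (rotate m q)" for q m
    by (induction m) (simp_all add: moves_into_S124_rotate1)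
  have "rotate (6 * k) (rotate k p) = p"
    using assms by (simp add: rotate_rotate)
  then show ?thesis using forward[of "rotate k p" "6 * k"] forward[of p k] by auto
qed

lemma rotate_7_zero:
  assumes "length p = 7" "i < 7" "p ! i = 0"
  shows "rotate i p = [0, p!((i+1) mod 7), p!((i+2) mod 7), p!((i+3) mod 7),
                          p!((i+4) mod 7), p!((i+5) mod 7), p!((i+6) mod 7)]"
  using assms by (simp add: rotate_7)

lemma in_class_zero_first: "C (0 # xs) \<Longrightarrow> in_class C (0 # xs)"
  unfolding in_class_def sym_images_def
  by (rule bexI[of _ "0 # xs"]) (auto intro: exI[of _ 0] Min_eqI)

lemma in_S124_zero: "in_S124 [0,0,0,0,0,0,0]"
  unfolding in_S124_def by (intro disjI2 disjI1 in_class_zero_first) (simp add: S2_cond_def)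

lemma in_S124_S1: "0 < x \<Longrightarrow> u + v + w = x \<Longrightarrow> in_S124 [0,0,x,u,v,w,x]"
  unfolding in_S124_def by (intro disjI1 in_class_zero_first) (simp add: S1_cond_def)

lemma in_S124_S4:
  "0 < b \<Longrightarrow> 0 < e \<Longrightarrow> 0 < c \<or> 0 < d \<Longrightarrow> b + c = g \<Longrightarrow> d + e = g \<Longrightarrow> in_S124 [0,b,c,d,e,0,g]"
  unfolding in_S124_def by (intro disjI2 in_class_zero_first) (auto simp: S4_cond_def)

lemma moves_into_S124I:
  assumes "\<not> inS p" "cn_lowering p p'" "in_S124 p'"
  shows "moves_into_S124 p"
proof -
  have "p' \<noteq> p" using assms(1,3) unfolding inS_def in_S124_def by blast
  with assms(2,3) show ?thesis unfolding moves_into_S124_def cn_move_iff_lowering by blast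
qed

lemma moves_into_S124_to_zero:
  "\<not> inS p \<Longrightarrow> cn_lowering p [0,0,0,0,0,0,0] \<Longrightarrow> moves_into_S124 p"
  using moves_into_S124I in_S124_zero by blast

lemma moves_into_S124_to_S1:
  assumes "\<not> inS p" "cn_lowering p (rotate k [0,0,x,u,v,w,x])" "0 < x" "u + v + w = x"
  shows "moves_into_S124 p"
  using assms(1,2) by (rule moves_into_S124I) (simp add: in_S124_rotate in_S124_S1 assms(3,4))

lemma moves_into_S124_to_S4:
  assumes "\<not> inS p" "cn_lowering p [0,b,c,d,e,0,g]"
    and "0 < b" "0 < e" "0 < c \<or> 0 < d" "b + c = g" "d + e = g"
  shows "moves_into_S124 p"
  using assms(1,2) by (rule moves_into_S124I) (rule in_S124_S4[OF assms(3-7)])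

lemma nat_split_between:
  fixes t x y x0 y0 :: nat
  assumes "x0 \<le> x" "y0 \<le> y" "x0 + y0 \<le> t" "t \<le> x + y"
  obtains x' y' where "x0 \<le> x'" "x' \<le> x" "y0 \<le> y'" "y' \<le> y" "x' + y' = t"
  using assms by (intro that[of "min x (t - y0)" "t - min x (t - y0)"]) auto

lemma moves_into_S124_zeros_0_1:
  assumes nS: "\<not> inS [0,0,c,d,e,f,g]"
  shows "moves_into_S124 [0,0,c,d,e,f,g]"
proof -
  note to_S1 = moves_into_S124_to_S1[OF nS, of 0]
  have split3: "\<exists>u v w. u \<le> d \<and> v \<le> e \<and> w \<le> f \<and> u + v + w = x" if le: "x \<le> d + e + f" for x
  proof -
    obtain u s where "u \<le> d" "s \<le> e + f" "u + s = x"
      by (rule nat_split_between[of 0 d 0 "e + f" x]) (use le in auto)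
    moreover obtain v w where "v \<le> e" "w \<le> f" "v + w = s"
      by (rule nat_split_between[of 0 e 0 f s]) (use \<open>s \<le> e + f\<close> in auto)
    ultimately show ?thesis by (intro exI[of _ u] exI[of _ v] exI[of _ w]) auto
  qed
  consider "c = 0 \<or> g = 0 \<or> d + e + f = 0"
    | (g_min) "0 < g" "g \<le> c" "g \<le> d + e + f"
    | (c_min) "0 < c" "c < g" "c \<le> d + e + f"
    | (middle_min) "0 < d + e + f" "d + e + f < c" "d + e + f < g"
    by linarith
  then show ?thesis
  proof cases
    case 1
    then show ?thesis using nS by (intro moves_into_S124_to_zero) (auto simp: cn_lowering_7)
  next
    case g_min
    then obtain u v w where "u \<le> d" "v \<le> e" "w \<le> f" "u + v + w = g" using split3 by blast
    with g_min show ?thesis by (intro to_S1[of g u v w]) (simp_all add: cn_lowering_7)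
  next
    case c_min
    then obtain u v w where "u \<le> d" "v \<le> e" "w \<le> f" "u + v + w = c" using split3 by blast
    with c_min show ?thesis by (intro to_S1[of c u v w]) (simp_all add: cn_lowering_7)
  next
    case middle_min
    then show ?thesis by (intro to_S1[of "d + e + f" d e f]) (simp_all add: cn_lowering_7)
  qed
qed

lemma moves_into_S124_adjacent_zeros:
  assumes "length p = 7" "\<not> inS p" "i < 7" "p ! i = 0" "p ! ((i + 1) mod 7) = 0"
  shows "moves_into_S124 p"
proof -
  have "\<not> inS (rotate i p)" using assms(1,2) by (simp add: inS_rotate)
  then have "moves_into_S124 (rotate i p)"
    using assms(5) unfolding rotate_7_zero[OF assms(1,3,4)] by (simp add: moves_into_S124_zeros_0_1)
  with assms(1) show ?thesis by (simp add: moves_into_S124_rotate)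
qed

context
  fixes b c d e g :: nat
  assumes nS: "\<not> inS [0,b,c,d,e,0,g]" and pos: "0 < b" "0 < e" "0 < g" "0 < c \<or> 0 < d"
begin

(* The target is [0,b',c',d',e',0,t] in S4 with t the least of g, b + c and d + e, so that
   only the stacks on the other two sides change. S4 needs b', e' and one of c', d' positive,
   which fails exactly when t = 1; then a rotation of [0,0,1,0,1,0,1] in S1 is reached. *)

lemma zeros_0_5_g_min:
  assumes g_min: "g \<le> b + c" "g \<le> d + e"
  shows "moves_into_S124 [0,b,c,d,e,0,g]"
proof -
  consider "g = 1" "0 < c" | "g = 1" "c = 0" | "2 \<le> g" "0 < c" | "2 \<le> g" "c = 0"
    using pos by linarith
  then show ?thesis
  proof cases
    case 1
    with pos show ?thesis
      by (intro moves_into_S124_to_S1[OF nS, of 0 1 0 1 0]) (simp_all add: cn_lowering_7)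
  next
    case 2
    with pos show ?thesis
      by (intro moves_into_S124_to_S1[OF nS, of 3 1 0 1 0]) (simp_all add: rotate_7 cn_lowering_7)
  next
    case 3
    obtain b' c' where "1 \<le> b'" "b' \<le> b" "1 \<le> c'" "c' \<le> c" "b' + c' = g"
      by (rule nat_split_between[of 1 b 1 c g]) (use 3 g_min pos in auto)
    moreover obtain e' d' where "1 \<le> e'" "e' \<le> e" "d' \<le> d" "e' + d' = g"
      by (rule nat_split_between[of 1 e 0 d g]) (use 3 g_min pos in auto)
    ultimately show ?thesis
      by (intro moves_into_S124_to_S4[OF nS, of b' c' d' e']) (simp_all add: cn_lowering_7)
  next
    case 4
    obtain d' e' where "1 \<le> d'" "d' \<le> d" "1 \<le> e'" "e' \<le> e" "d' + e' = g"
      by (rule nat_split_between[of 1 d 1 e g]) (use 4 g_min pos in auto)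
    with 4 g_min show ?thesis
      by (intro moves_into_S124_to_S4[OF nS, of g 0 d' e']) (simp_all add: cn_lowering_7)
  qed
qed

lemma zeros_0_5_bc_min:
  assumes bc_min: "b + c < g" "b + c \<le> d + e"
  shows "moves_into_S124 [0,b,c,d,e,0,g]"
proof -
  consider "0 < c" | "c = 0" "b = 1" | "c = 0" "2 \<le> b"
    using pos by linarith
  then show ?thesis
  proof cases
    case 1
    obtain e' d' where "1 \<le> e'" "e' \<le> e" "d' \<le> d" "e' + d' = b + c"
      by (rule nat_split_between[of 1 e 0 d "b + c"]) (use bc_min pos in auto)
    with 1 bc_min pos show ?thesis
      by (intro moves_into_S124_to_S4[OF nS, of b c d' e']) (simp_all add: cn_lowering_7)
  next
    case 2
    with bc_min pos show ?thesis
      by (intro moves_into_S124_to_S1[OF nS, of 5 1 0 1 0]) (simp_all add: rotate_7 cn_lowering_7)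
  next
    case 3
    obtain d' e' where "1 \<le> d'" "d' \<le> d" "1 \<le> e'" "e' \<le> e" "d' + e' = b"
      by (rule nat_split_between[of 1 d 1 e b]) (use 3 bc_min pos in auto)
    with 3 bc_min show ?thesis
      by (intro moves_into_S124_to_S4[OF nS, of b 0 d' e']) (simp_all add: cn_lowering_7)
  qed
qed

lemma zeros_0_5_de_min:
  assumes de_min: "d + e < g" "d + e < b + c"
  shows "moves_into_S124 [0,b,c,d,e,0,g]"
proof -
  consider "0 < d" | "d = 0" "e = 1" | "d = 0" "2 \<le> e"
    using pos by linarith
  then show ?thesis
  proof cases
    case 1
    obtain b' c' where "1 \<le> b'" "b' \<le> b" "c' \<le> c" "b' + c' = d + e"
      by (rule nat_split_between[of 1 b 0 c "d + e"]) (use de_min pos in auto)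
    with 1 de_min pos show ?thesis
      by (intro moves_into_S124_to_S4[OF nS, of b' c' d e]) (simp_all add: cn_lowering_7)
  next
    case 2
    with de_min pos show ?thesis
      by (intro moves_into_S124_to_S1[OF nS, of 5 1 0 1 0]) (simp_all add: rotate_7 cn_lowering_7)
  next
    case 3
    obtain b' c' where "1 \<le> b'" "b' \<le> b" "1 \<le> c'" "c' \<le> c" "b' + c' = e"
      by (rule nat_split_between[of 1 b 1 c e]) (use 3 de_min pos in auto)
    with 3 de_min show ?thesis
      by (intro moves_into_S124_to_S4[OF nS, of b' c' 0 e]) (simp_all add: cn_lowering_7)
  qed
qed

lemma moves_into_S124_zeros_0_5_spread: "moves_into_S124 [0,b,c,d,e,0,g]"
proof -
  consider "g \<le> b + c" "g \<le> d + e" | "b + c < g" "b + c \<le> d + e" | "d + e < g" "d + e < b + c"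
    by linarith
  then show ?thesis by cases (simp_all add: zeros_0_5_g_min zeros_0_5_bc_min zeros_0_5_de_min)
qed

end

lemma moves_into_S124_zeros_0_5:
  assumes nS: "\<not> inS [0,b,c,d,e,0,g]"
  shows "moves_into_S124 [0,b,c,d,e,0,g]"
proof -
  let ?p = "[0,b,c,d,e,0,g]"
  have adjacent: "moves_into_S124 ?p" if "i < 7" "?p ! i = 0" "?p ! ((i + 1) mod 7) = 0" for i
    using nS that by (intro moves_into_S124_adjacent_zeros) simp_all
  consider "b = 0" | "c = 0" "d = 0" | "e = 0" | "g = 0"
    | "0 < b" "0 < e" "0 < g" "0 < c \<or> 0 < d"
    by auto
  then show ?thesis
  proof cases
    case 1 then show ?thesis using adjacent[of 0] by simp
  next
    case 2 then show ?thesis using adjacent[of 2] by simp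
  next
    case 3 then show ?thesis using adjacent[of 4] by simp
  next
    case 4 then show ?thesis using adjacent[of 5] by simp
  next
    case 5 with nS show ?thesis by (rule moves_into_S124_zeros_0_5_spread)
  qed
qed

context
  fixes b c e f g :: nat
  assumes nS: "\<not> inS [0,b,c,0,e,f,g]" and pos: "0 < b" "0 < c" "0 < e" "0 < f" "0 < g"
begin

(* zeros_0_3_clear_x_keep_yz: the move empties stack x and leaves y and z untouched. *)

lemma zeros_0_3_clear_b_keep_ef:
  "e + f \<le> c \<Longrightarrow> e + f \<le> g \<Longrightarrow> moves_into_S124 [0,b,c,0,e,f,g]"
  using pos by (intro moves_into_S124_to_S1[OF nS, of 0 "e + f" 0 e f]) (simp_all add: cn_lowering_7)

lemma zeros_0_3_clear_b_keep_fg: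
  "g \<le> c \<Longrightarrow> f \<le> g \<Longrightarrow> g \<le> e + f \<Longrightarrow> moves_into_S124 [0,b,c,0,e,f,g]"
  using pos by (intro moves_into_S124_to_S1[OF nS, of 0 g 0 "g - f" f]) (simp_all add: cn_lowering_7)

lemma zeros_0_3_clear_b_keep_ce:
  "c \<le> g \<Longrightarrow> e \<le> c \<Longrightarrow> c \<le> e + f \<Longrightarrow> moves_into_S124 [0,b,c,0,e,f,g]"
  using pos by (intro moves_into_S124_to_S1[OF nS, of 0 c 0 e "c - e"]) (simp_all add: cn_lowering_7)

lemma zeros_0_3_clear_c_keep_fg:
  "f + g \<le> b \<Longrightarrow> f + g \<le> e \<Longrightarrow> moves_into_S124 [0,b,c,0,e,f,g]"
  using pos by (intro moves_into_S124_to_S1[OF nS, of 5 "f + g" f g 0]) (simp_all add: rotate_7 cn_lowering_7)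

lemma zeros_0_3_clear_c_keep_bg:
  "b \<le> e \<Longrightarrow> g \<le> b \<Longrightarrow> b \<le> f + g \<Longrightarrow> moves_into_S124 [0,b,c,0,e,f,g]"
  using pos by (intro moves_into_S124_to_S1[OF nS, of 5 b "b - g" g 0]) (simp_all add: rotate_7 cn_lowering_7)

lemma zeros_0_3_clear_c_keep_ef:
  "e \<le> b \<Longrightarrow> f \<le> e \<Longrightarrow> e \<le> f + g \<Longrightarrow> moves_into_S124 [0,b,c,0,e,f,g]"
  using pos by (intro moves_into_S124_to_S1[OF nS, of 5 e f "e - f" 0]) (simp_all add: rotate_7 cn_lowering_7)

lemma zeros_0_3_clear_e_keep_bg:
  "g + b \<le> c \<Longrightarrow> g + b \<le> f \<Longrightarrow> moves_into_S124 [0,b,c,0,e,f,g]"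
  using pos by (intro moves_into_S124_to_S1[OF nS, of 4 "g + b" g 0 b]) (simp_all add: rotate_7 cn_lowering_7)

lemma zeros_0_3_clear_e_keep_bc:
  "c \<le> f \<Longrightarrow> b \<le> c \<Longrightarrow> c \<le> g + b \<Longrightarrow> moves_into_S124 [0,b,c,0,e,f,g]"
  using pos by (intro moves_into_S124_to_S1[OF nS, of 4 c "c - b" 0 b]) (simp_all add: rotate_7 cn_lowering_7)

lemma zeros_0_3_clear_e_keep_fg:
  "f \<le> c \<Longrightarrow> g \<le> f \<Longrightarrow> f \<le> g + b \<Longrightarrow> moves_into_S124 [0,b,c,0,e,f,g]"
  using pos by (intro moves_into_S124_to_S1[OF nS, of 4 f g 0 "f - g"]) (simp_all add: rotate_7 cn_lowering_7)

lemma zeros_0_3_clear_g_keep_ce: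
  "c + e \<le> b \<Longrightarrow> c + e \<le> f \<Longrightarrow> moves_into_S124 [0,b,c,0,e,f,g]"
  using pos by (intro moves_into_S124_to_S1[OF nS, of 1 "c + e" c 0 e]) (simp_all add: rotate_7 cn_lowering_7)

lemma zeros_0_3_clear_g_keep_ef:
  "f \<le> b \<Longrightarrow> e \<le> f \<Longrightarrow> f \<le> c + e \<Longrightarrow> moves_into_S124 [0,b,c,0,e,f,g]"
  using pos by (intro moves_into_S124_to_S1[OF nS, of 1 f "f - e" 0 e]) (simp_all add: rotate_7 cn_lowering_7)

lemma zeros_0_3_clear_g_keep_bc:
  "b \<le> f \<Longrightarrow> c \<le> b \<Longrightarrow> b \<le> c + e \<Longrightarrow> moves_into_S124 [0,b,c,0,e,f,g]"
  using pos by (intro moves_into_S124_to_S1[OF nS, of 1 b c 0 "b - c"]) (simp_all add: rotate_7 cn_lowering_7)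

lemma zeros_0_3_clear_f_keep_bc:
  "b + c \<le> e \<Longrightarrow> b + c \<le> g \<Longrightarrow> moves_into_S124 [0,b,c,0,e,f,g]"
  using pos by (intro moves_into_S124_to_S4[OF nS, of b c 0 "b + c"]) (simp_all add: cn_lowering_7)

lemma zeros_0_3_clear_f_keep_ce:
  "e \<le> g \<Longrightarrow> c < e \<Longrightarrow> e \<le> b + c \<Longrightarrow> moves_into_S124 [0,b,c,0,e,f,g]"
  using pos by (intro moves_into_S124_to_S4[OF nS, of "e - c" c 0 e]) (simp_all add: cn_lowering_7)

lemma zeros_0_3_clear_f_keep_bg:
  "g \<le> e \<Longrightarrow> b < g \<Longrightarrow> g \<le> b + c \<Longrightarrow> moves_into_S124 [0,b,c,0,e,f,g]"
  using pos by (intro moves_into_S124_to_S4[OF nS, of b "g - b" 0 g]) (simp_all add: cn_lowering_7)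

lemma moves_into_S124_zeros_0_3_spread: "moves_into_S124 [0,b,c,0,e,f,g]"
proof -
  consider (b_max) "c \<le> b" "e \<le> b" "f \<le> b" "g \<le> b"
    | (c_max) "b \<le> c" "e \<le> c" "f \<le> c" "g \<le> c"
    | (e_max) "b \<le> e" "c \<le> e" "f \<le> e" "g \<le> e"
    | (f_max) "b \<le> f" "c \<le> f" "e \<le> f" "g \<le> f"
    | (g_max) "b \<le> g" "c \<le> g" "e \<le> g" "f \<le> g"
    by linarith
  then show ?thesis
  proof cases
    case b_max
    then show ?thesis
      by (cases "f \<le> e"; cases "e \<le> f + g"; cases "f \<le> c + e")
        (auto intro: zeros_0_3_clear_c_keep_ef zeros_0_3_clear_c_keep_fg
                     zeros_0_3_clear_g_keep_ef zeros_0_3_clear_g_keep_ce)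
  next
    case c_max
    then show ?thesis
      by (cases "g \<le> f"; cases "f \<le> g + b"; cases "g \<le> f + e")
        (auto intro: zeros_0_3_clear_e_keep_fg zeros_0_3_clear_e_keep_bg
                     zeros_0_3_clear_b_keep_fg zeros_0_3_clear_b_keep_ef)
  next
    case e_max
    then show ?thesis
      by (cases "b < g"; cases "g \<le> b + c"; cases "b \<le> g + f")
        (auto intro: zeros_0_3_clear_f_keep_bg zeros_0_3_clear_f_keep_bc
                     zeros_0_3_clear_c_keep_bg zeros_0_3_clear_c_keep_fg)
  next
    case f_max
    then show ?thesis
      by (cases "c \<le> b"; cases "b \<le> c + e"; cases "c \<le> b + g")
        (auto intro: zeros_0_3_clear_g_keep_bc zeros_0_3_clear_g_keep_ce
                     zeros_0_3_clear_e_keep_bc zeros_0_3_clear_e_keep_bg)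
  next
    case g_max
    then show ?thesis
      by (cases "e \<le> c"; cases "c \<le> e + f"; cases "e \<le> b + c")
        (auto intro: zeros_0_3_clear_b_keep_ce zeros_0_3_clear_b_keep_ef
                     zeros_0_3_clear_f_keep_ce zeros_0_3_clear_f_keep_bc)
  qed
qed

end

lemma moves_into_S124_zeros_0_3:
  assumes nS: "\<not> inS [0,b,c,0,e,f,g]"
  shows "moves_into_S124 [0,b,c,0,e,f,g]"
proof -
  let ?p = "[0,b,c,0,e,f,g]"
  have adjacent: "moves_into_S124 ?p" if "i < 7" "?p ! i = 0" "?p ! ((i + 1) mod 7) = 0" for i
    using nS that by (intro moves_into_S124_adjacent_zeros) simp_all
  consider "b = 0" | "c = 0" | "e = 0" | "g = 0" | "f = 0"
    | "0 < b" "0 < c" "0 < e" "0 < f" "0 < g"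
    by auto
  then show ?thesis
  proof cases
    case 1 then show ?thesis using adjacent[of 0] by simp
  next
    case 2 then show ?thesis using adjacent[of 2] by simp
  next
    case 3 then show ?thesis using adjacent[of 3] by simp
  next
    case 4 then show ?thesis using adjacent[of 6] by simp
  next
    case 5 with nS show ?thesis using moves_into_S124_zeros_0_5[of b c 0 e g] by simp
  next
    case 6 with nS show ?thesis by (rule moves_into_S124_zeros_0_3_spread)
  qed
qed

lemma odd_cyclic_distance_7:
  fixes i j :: nat
  assumes "i < 7" "j < 7" "i \<noteq> j"
  shows "(\<exists>k\<in>{1, 3, 5}. j = (i + k) mod 7) \<or> (\<exists>k\<in>{1, 3, 5}. i = (j + k) mod 7)"
proof -
  have ordered: "(\<exists>k\<in>{1, 3, 5}. y = (x + k) mod 7) \<or> (\<exists>k\<in>{1, 3, 5}. x = (y + k) mod 7)"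
    if "x < y" "y < 7" for x y :: nat
  proof -
    have "y - x \<in> {1, 2, 3, 4, 5, 6}" using that by auto
    then consider "y - x \<in> {1, 3, 5}" | "7 - (y - x) \<in> {1, 3, 5}" by auto
    then show ?thesis
    proof cases
      case 1
      with that show ?thesis by (intro disjI1 bexI[of _ "y - x"]) auto
    next
      case 2
      have "x = (y + (7 - (y - x))) mod 7" using that by simp
      with 2 show ?thesis by blast
    qed
  qed
  from assms ordered[of i j] ordered[of j i] show ?thesis by linarith
qed

lemma moves_into_S124_zero_pair:
  assumes "length p = 7" "\<not> inS p" "s < 7" "k \<in> {1, 3, 5}" "p ! s = 0" "p ! ((s + k) mod 7) = 0"
  shows "moves_into_S124 p"
proof -
  have "\<not> inS (rotate s p)" using assms(1,2) by (simp add: inS_rotate)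
  with assms(4,6) have "moves_into_S124 (rotate s p)"
    unfolding rotate_7_zero[OF assms(1,3,5)]
    by (auto simp: moves_into_S124_zeros_0_1 moves_into_S124_zeros_0_3 moves_into_S124_zeros_0_5)
  with assms(1) show ?thesis by (simp add: moves_into_S124_rotate)
qed

theorem lemma2:
  fixes p :: "nat list"
  assumes "cn_pos p"
    and "\<not> inS p"
    and "card {j. j < 7 \<and> p!j = 0} \<ge> 2"
  shows "\<exists>p'. cn_move p p' \<and>
           (in_class S1_cond p' \<or> in_class S2_cond p' \<or> in_class S4_cond p')"
proof -
  have len: "length p = 7" using assms(1) unfolding cn_pos_def .
  have "\<not> card {j. j < 7 \<and> p!j = 0} \<le> Suc 0" using assms(3) by simp
  then obtain i j where ij: "i < 7" "j < 7" "i \<noteq> j" "p ! i = 0" "p ! j = 0"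
    using card_le_Suc0_iff_eq[of "{j. j < 7 \<and> p!j = 0}"] by auto
  note zero_pair = moves_into_S124_zero_pair[OF len assms(2)]
  from odd_cyclic_distance_7[OF ij(1-3)] have "moves_into_S124 p"
  proof (elim disjE bexE)
    fix k assume "k \<in> {1, 3, 5}" "j = (i + k) mod 7"
    with ij show ?thesis by (intro zero_pair[of i k]) simp_all
  next
    fix k assume "k \<in> {1, 3, 5}" "i = (j + k) mod 7"
    with ij show ?thesis by (intro zero_pair[of j k]) simp_all
  qed
  then show ?thesis unfolding moves_into_S124_def in_S124_def .
qed

end
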